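(* There is a constant $c>0$ such that for every $n \ge 2$, every path on $n$ vertices has an $x$-monotone straight-through drawing on any set of at least $c\, n \log n$ points in the plane in general orthogonal position.
   Context: A point set is in general orthogonal position if no two of its points share the same $x$-coordinate or the same $y$-coordinate. Points are unlabelled: a drawing of a graph on a point set $P$ places the vertices at distinct points of $P$ (any vertex may go to any point; not all points need to be used). A planar L-shaped drawing is such a placement in which every edge is drawn as an orthogonal polygonal path consisting of one horizontal and one vertical segment (one bend) between its endpoints, and no two edges intersect except at a common endpoint. A straight-through drawing of a path is a planar L-shaped drawing in which, at every vertex, its (at most two) incident edges are aligned, i.e., both leave the vertex horizontally or both leave it vertically. The drawing is $x$-monotone if the $x$-coordinates of the vertices are non-decreasing in the order along the path. *)

theory Defs
  imports "HOL-Analysis.Analysis"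
begin

type_synonym point = "real \<times> real"

definition general_orthogonal_position :: "point set \<Rightarrow> bool" where
  "general_orthogonal_position P \<longleftrightarrow>
     (\<forall>p\<in>P. \<forall>q\<in>P. p \<noteq> q \<longrightarrow> fst p \<noteq> fst q \<and> snd p \<noteq> snd q)"

text \<open>If h is True, the edge
  leaves p horizontally (bend at (x_q, y_p)) and enters q vertically; otherwise it
  leaves p vertically (bend at (x_p, y_q)) and enters q horizontally.\<close>
definition bend_point :: "point \<Rightarrow> point \<Rightarrow> bool \<Rightarrow> point" where
  "bend_point p q h = (if h then (fst q, snd p) else (fst p, snd q))"

definition L_edge :: "point \<Rightarrow> point \<Rightarrow> bool \<Rightarrow> point set" where
  "L_edge p q h = closed_segment p (bend_point p q h) \<union> closed_segment (bend_point p q h) q"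

text \<open>Path on n vertices 0,...,n-1 with edges {i, i+1}.\<close>
definition path_edge :: "(nat \<Rightarrow> point) \<Rightarrow> (nat \<Rightarrow> bool) \<Rightarrow> nat \<Rightarrow> point set" where
  "path_edge pos hb i = L_edge (pos i) (pos (Suc i)) (hb i)"

definition planar_L_drawing_path ::
  "point set \<Rightarrow> nat \<Rightarrow> (nat \<Rightarrow> point) \<Rightarrow> (nat \<Rightarrow> bool) \<Rightarrow> bool" where
  "planar_L_drawing_path P n pos hb \<longleftrightarrow>
     inj_on pos {..<n} \<and> pos ` {..<n} \<subseteq> P \<and>
     (\<forall>i j. i < j \<and> Suc j < n \<longrightarrow>
        path_edge pos hb i \<inter> path_edge pos hb j \<subseteq> pos ` ({i, Suc i} \<inter> {j, Suc j}))"

definition leaves_start_horizontally :: "(nat \<Rightarrow> bool) \<Rightarrow> nat \<Rightarrow> bool" where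
  "leaves_start_horizontally hb i = hb i"

definition leaves_end_horizontally :: "(nat \<Rightarrow> bool) \<Rightarrow> nat \<Rightarrow> bool" where
  "leaves_end_horizontally hb i = (\<not> hb i)"

definition straight_through_drawing_path ::
  "point set \<Rightarrow> nat \<Rightarrow> (nat \<Rightarrow> point) \<Rightarrow> (nat \<Rightarrow> bool) \<Rightarrow> bool" where
  "straight_through_drawing_path P n pos hb \<longleftrightarrow>
     planar_L_drawing_path P n pos hb \<and>
     (\<forall>i. 0 < i \<and> Suc i < n \<longrightarrow>
        leaves_end_horizontally hb (i - 1) = leaves_start_horizontally hb i)"

definition x_monotone_path :: "nat \<Rightarrow> (nat \<Rightarrow> point) \<Rightarrow> bool" where
  "x_monotone_path n pos \<longleftrightarrow> (\<forall>i. Suc i < n \<longrightarrow> fst (pos i) \<le> fst (pos (Suc i)))"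

end

theory Submission imports Defs begin

text \<open>By the Erdos-Szekeres argument, among five points in general orthogonal position
  there are three whose y-coordinates are monotone in the order of their x-coordinates,
  i.e. a point q in the open box spanned by points p and r. Hence a set S contains at most
  four points without such a partner r to their right; discarding them and recursing,
  4m + 1 points yield an x-increasing chain c_0, ..., c_m whose consecutive members span
  boxes containing witnesses w_k. Put the even path vertices at the c_k and the odd ones at
  the w_k, and let every edge leave its even endpoint horizontally: at w_k both edges are
  vertical, and they meet only in w_k because its y-coordinate lies strictly between those
  of its neighbours. So 2n + 1 points already suffice.\<close>

definition strictly_between :: "'a::linorder \<Rightarrow> 'a \<Rightarrow> 'a \<Rightarrow> bool" where
  "strictly_between a b c \<longleftrightarrow> a < b \<and> b < c \<or> c < b \<and> b < a"

definition box_between :: "point \<Rightarrow> point \<Rightarrow> point \<Rightarrow> bool" where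
  "box_between p q r \<longleftrightarrow>
     fst p < fst q \<and> fst q < fst r \<and> strictly_between (snd p) (snd q) (snd r)"

lemma erdos_szekeres_five:
  fixes f :: "nat \<Rightarrow> 'a::linorder"
  assumes "inj_on f {..<5}"
  shows "\<exists>i j k. i < j \<and> j < k \<and> k < 5 \<and> strictly_between (f i) (f j) (f k)"
proof -
  have triple: "strictly_between (f i) (f j) (f k) \<Longrightarrow> i < j \<Longrightarrow> j < k \<Longrightarrow> k < 5 \<Longrightarrow> ?thesis"
    for i j k by blast
  have "distinct [f 0, f 1, f 2, f 3, f 4]"
    using assms by (auto dest: inj_onD)
  then have "strictly_between (f 0) (f 1) (f 2) \<or> strictly_between (f 0) (f 1) (f 3) \<or>
      strictly_between (f 0) (f 1) (f 4) \<or> strictly_between (f 0) (f 2) (f 3) \<or>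
      strictly_between (f 0) (f 2) (f 4) \<or> strictly_between (f 0) (f 3) (f 4) \<or>
      strictly_between (f 1) (f 2) (f 3) \<or> strictly_between (f 1) (f 2) (f 4) \<or>
      strictly_between (f 1) (f 3) (f 4) \<or> strictly_between (f 2) (f 3) (f 4)"
    unfolding strictly_between_def by simp (smt (verit) linorder_neqE)
  then show ?thesis
    by (elim disjE) (erule triple; simp)+
qed

lemma general_orthogonal_position_subset:
  "general_orthogonal_position P \<Longrightarrow> T \<subseteq> P \<Longrightarrow> general_orthogonal_position T"
  unfolding general_orthogonal_position_def by blast

lemma box_between_among_five_points:
  assumes "finite T" and gop: "general_orthogonal_position T" and five: "card T \<ge> 5"
  shows "\<exists>p\<in>T. \<exists>q\<in>T. \<exists>r\<in>T. box_between p q r"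
proof -
  have inj_fst: "inj_on fst T"
    using gop unfolding general_orthogonal_position_def inj_on_def by blast
  define L where "L = sorted_list_of_set (fst ` T)"
  define pt where "pt i = inv_into T fst (L ! i)" for i
  have L: "sorted_wrt (<) L" "distinct L" "set L = fst ` T" "length L = card T"
    using assms inj_fst by (simp_all add: L_def card_image)
  have pt: "pt i \<in> T" "fst (pt i) = L ! i" if "i < 5" for i
  proof -
    have "L ! i \<in> fst ` T" using that five L by (metis nth_mem order_less_le_trans)
    then show "pt i \<in> T" "fst (pt i) = L ! i" by (simp_all add: pt_def inv_into_into f_inv_into_f)
  qed
  have "inj_on (\<lambda>i. snd (pt i)) {..<5}"
  proof (rule inj_onI)
    fix i j assume ij: "i \<in> {..<5}" "j \<in> {..<5}" "snd (pt i) = snd (pt j)"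
    then have "pt i = pt j"
      using gop pt unfolding general_orthogonal_position_def by blast
    then have "L ! i = L ! j" using ij pt by (metis lessThan_iff)
    then show "i = j"
      using ij five L by (simp add: nth_eq_iff_index_eq)
  qed
  then obtain i j k where ijk: "i < j" "j < k" "k < 5"
      and "strictly_between (snd (pt i)) (snd (pt j)) (snd (pt k))"
    using erdos_szekeres_five by blast
  moreover have "L ! i < L ! j" "L ! j < L ! k"
    using ijk five L by (simp_all add: sorted_wrt_nth_less)
  ultimately have "box_between (pt i) (pt j) (pt k)"
    using pt by (simp add: box_between_def)
  moreover have "pt i \<in> T" "pt j \<in> T" "pt k \<in> T"
    using pt(1) ijk by simp_all
  ultimately show ?thesis by blast
qed

lemma box_between_chain:
  assumes fin: "finite P" and gop: "general_orthogonal_position P"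
    and "S \<subseteq> P" and "card S \<ge> 4 * m + 1"
  shows "\<exists>c. (\<forall>i\<le>m. c i \<in> S) \<and> (\<forall>i<m. \<exists>q\<in>P. box_between (c i) q (c (Suc i)))"
  using assms(3,4)
proof (induction m arbitrary: S)
  case 0
  then have "S \<noteq> {}" by auto
  then obtain s where "s \<in> S" by blast
  then show ?case by (intro exI[of _ "\<lambda>_. s"]) simp
next
  case (Suc m)
  define T where "T = {u \<in> S. \<not> (\<exists>w\<in>S. \<exists>q\<in>P. box_between u q w)}"
  have "T \<subseteq> S" by (auto simp: T_def)
  have "finite S" using Suc.prems(1) fin by (rule finite_subset)
  then have "finite T" using \<open>T \<subseteq> S\<close> by (rule rev_finite_subset)
  have "card T \<le> 4"
  proof (rule ccontr)
    assume "\<not> card T \<le> 4"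
    then have "card T \<ge> 5" by simp
    moreover have "general_orthogonal_position T"
      using gop \<open>T \<subseteq> S\<close> Suc.prems(1) by (metis general_orthogonal_position_subset order_trans)
    ultimately obtain p q r where "p \<in> T" "q \<in> T" "r \<in> T" "box_between p q r"
      using box_between_among_five_points \<open>finite T\<close> by blast
    moreover have "q \<in> P" "r \<in> S" using \<open>q \<in> T\<close> \<open>r \<in> T\<close> \<open>T \<subseteq> S\<close> Suc.prems(1) by auto
    ultimately show False unfolding T_def by blast
  qed
  then have "card (S - T) \<ge> 4 * m + 1"
    using \<open>T \<subseteq> S\<close> \<open>finite T\<close> Suc.prems(2) by (simp add: card_Diff_subset)
  moreover have "S - T \<subseteq> P" using Suc.prems(1) by blast
  ultimately obtain c where c: "\<forall>i\<le>m. c i \<in> S - T"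
      "\<forall>i<m. \<exists>q\<in>P. box_between (c i) q (c (Suc i))"
    using Suc.IH by blast
  then obtain w where "w \<in> S" "\<exists>q\<in>P. box_between (c m) q w"
    unfolding T_def by blast
  then show ?case
  proof (intro exI[of _ "c(Suc m := w)"] conjI allI impI)
    show "(c(Suc m := w)) i \<in> S" if "i \<le> Suc m" for i
      using c(1) \<open>w \<in> S\<close> that by (cases "i = Suc m") auto
    show "\<exists>q\<in>P. box_between ((c(Suc m := w)) i) q ((c(Suc m := w)) (Suc i))" if "i < Suc m" for i
      using c(2) \<open>\<exists>q\<in>P. box_between (c m) q w\<close> that by (cases "i = m") auto
  qed
qed

lemma closed_segment_coordinate_bounds:
  fixes a b z :: point
  assumes "z \<in> closed_segment a b"
  shows "min (fst a) (fst b) \<le> fst z \<and> fst z \<le> max (fst a) (fst b) \<and>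
         min (snd a) (snd b) \<le> snd z \<and> snd z \<le> max (snd a) (snd b)"
proof -
  have "fst z \<in> closed_segment (fst a) (fst b)"
    using assms closed_segment_linear_image[of fst a b] linear_fst by auto
  moreover have "snd z \<in> closed_segment (snd a) (snd b)"
    using assms closed_segment_linear_image[of snd a b] linear_snd by auto
  ultimately show ?thesis by (auto simp: closed_segment_eq_real_ivl split: if_splits)
qed

lemma L_edge_fst_bounds:
  assumes "z \<in> L_edge p q h" "fst p \<le> fst q"
  shows "fst p \<le> fst z \<and> fst z \<le> fst q"
  using assms unfolding L_edge_def bend_point_def
  by (cases h) (auto dest!: closed_segment_coordinate_bounds)

lemma L_edge_at_start_column:
  assumes "z \<in> L_edge p q h" "fst p < fst q" "fst z = fst p"
  shows "if h then snd z = snd p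
         else min (snd p) (snd q) \<le> snd z \<and> snd z \<le> max (snd p) (snd q)"
  using assms unfolding L_edge_def bend_point_def
  by (cases h) (auto dest!: closed_segment_coordinate_bounds)

lemma L_edge_at_end_column:
  assumes "z \<in> L_edge p q h" "fst p < fst q" "fst z = fst q"
  shows "if h then min (snd p) (snd q) \<le> snd z \<and> snd z \<le> max (snd p) (snd q)
         else snd z = snd q"
  using assms unfolding L_edge_def bend_point_def
  by (cases h) (auto dest!: closed_segment_coordinate_bounds)

lemma zigzag_straight_through_drawing:
  assumes inc: "\<And>i. Suc i < n \<Longrightarrow> fst (pos i) < fst (pos (Suc i))"
    and between: "\<And>i. even i \<Longrightarrow> Suc (Suc i) < n \<Longrightarrow>
      strictly_between (snd (pos i)) (snd (pos (Suc i))) (snd (pos (Suc (Suc i))))"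
    and "pos ` {..<n} \<subseteq> P"
  shows "straight_through_drawing_path P n pos (\<lambda>i. even i) \<and> x_monotone_path n pos"
proof -
  let ?hb = "\<lambda>i::nat. even i"
  have inc_trans: "fst (pos i) < fst (pos j)" if "i < j" "j < n" for i j
    using that by (induction j) (auto simp: less_Suc_eq intro: inc less_trans)
  have edge_fst: "fst (pos i) \<le> fst z \<and> fst z \<le> fst (pos (Suc i))"
    if "z \<in> path_edge pos ?hb i" "Suc i < n" for z i
    using that inc[of i] unfolding path_edge_def by (auto dest!: L_edge_fst_bounds)
  have adjacent: "z = pos (Suc i)"
    if z: "z \<in> path_edge pos ?hb i" "z \<in> path_edge pos ?hb (Suc i)" and "Suc (Suc i) < n" for z i
  proof -
    have zi: "z \<in> L_edge (pos i) (pos (Suc i)) (even i)"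
      and zSi: "z \<in> L_edge (pos (Suc i)) (pos (Suc (Suc i))) (odd i)"
      using z unfolding path_edge_def by simp_all
    have "fst z = fst (pos (Suc i))"
      using edge_fst[OF z(1)] edge_fst[OF z(2)] \<open>Suc (Suc i) < n\<close> by fastforce
    moreover have "snd z = snd (pos (Suc i))"
    proof (cases "even i")
      case True
      then show ?thesis
        using L_edge_at_end_column[OF zi] L_edge_at_start_column[OF zSi]
          between[OF True \<open>Suc (Suc i) < n\<close>] inc[of i] inc[of "Suc i"] \<open>Suc (Suc i) < n\<close>
          \<open>fst z = fst (pos (Suc i))\<close>
        unfolding strictly_between_def by (auto simp: min_def max_def split: if_splits)
    next
      case False
      then show ?thesis
        using L_edge_at_end_column[OF zi] inc[of i] \<open>Suc (Suc i) < n\<close>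
          \<open>fst z = fst (pos (Suc i))\<close> by simp
    qed
    ultimately show ?thesis by (simp add: prod_eq_iff)
  qed
  have planar: "path_edge pos ?hb i \<inter> path_edge pos ?hb j \<subseteq> pos ` ({i, Suc i} \<inter> {j, Suc j})"
    if "i < j" "Suc j < n" for i j
  proof
    fix z assume z: "z \<in> path_edge pos ?hb i \<inter> path_edge pos ?hb j"
    show "z \<in> pos ` ({i, Suc i} \<inter> {j, Suc j})"
    proof (cases "j = Suc i")
      case True
      then show ?thesis using adjacent z that by auto
    next
      case False
      then have "fst (pos (Suc i)) < fst (pos j)"
        using inc_trans that by simp
      then show ?thesis
        using edge_fst[of z i] edge_fst[of z j] z that by fastforce
    qed
  qed
  show ?thesis
    unfolding straight_through_drawing_path_def planar_L_drawing_path_def x_monotone_path_def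
      leaves_end_horizontally_def leaves_start_horizontally_def
  proof (intro conjI allI impI)
    show "inj_on pos {..<n}"
      by (rule inj_onI) (metis inc_trans lessThan_iff less_irrefl linorder_neqE_nat)
    show "pos ` {..<n} \<subseteq> P" by fact
    show "fst (pos i) \<le> fst (pos (Suc i))" if "Suc i < n" for i
      using inc[OF that] by simp
    show "(\<not> even (i - 1)) = even i" if "0 < i \<and> Suc i < n" for i
      using that by (cases i) auto
  qed (use planar in blast)
qed

lemma straight_through_drawing_from_chain:
  assumes c: "\<forall>i\<le>m. c i \<in> P" "\<forall>i<m. \<exists>q\<in>P. box_between (c i) q (c (Suc i))"
    and "n \<le> 2 * m + 1"
  shows "\<exists>pos hb. straight_through_drawing_path P n pos hb \<and> x_monotone_path n pos"
proof -
  obtain w where w: "\<And>k. k < m \<Longrightarrow> w k \<in> P \<and> box_between (c k) (w k) (c (Suc k))"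
    using c(2) by metis
  define pos where "pos i = (if even i then c (i div 2) else w (i div 2))" for i
  have "straight_through_drawing_path P n pos (\<lambda>i. even i) \<and> x_monotone_path n pos"
  proof (rule zigzag_straight_through_drawing)
    show "fst (pos i) < fst (pos (Suc i))" if "Suc i < n" for i
    proof (cases "even i")
      case True
      then show ?thesis using w[of "i div 2"] that \<open>n \<le> 2 * m + 1\<close>
        by (auto simp: pos_def box_between_def)
    next
      case False
      then have "Suc i div 2 = Suc (i div 2)" by presburger
      with False show ?thesis using w[of "i div 2"] that \<open>n \<le> 2 * m + 1\<close>
        by (auto simp: pos_def box_between_def)
    qed
    show "strictly_between (snd (pos i)) (snd (pos (Suc i))) (snd (pos (Suc (Suc i))))"
      if "even i" "Suc (Suc i) < n" for i
      using w[of "i div 2"] that \<open>n \<le> 2 * m + 1\<close> by (auto simp: pos_def box_between_def)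
    have "i div 2 \<le> m" "odd i \<Longrightarrow> i div 2 < m" if "i < n" for i
      using that \<open>n \<le> 2 * m + 1\<close> by presburger+
    then show "pos ` {..<n} \<subseteq> P"
      using c(1) w by (auto simp: pos_def)
  qed
  then show ?thesis by blast
qed

lemma straight_through_drawing_linear:
  assumes "finite P" "general_orthogonal_position P" "card P \<ge> 2 * n + 1"
  shows "\<exists>pos hb. straight_through_drawing_path P n pos hb \<and> x_monotone_path n pos"
proof -
  have "card P \<ge> 4 * (n div 2) + 1" using assms(3) by linarith
  then obtain c where "\<forall>i\<le>n div 2. c i \<in> P"
      "\<forall>i<n div 2. \<exists>q\<in>P. box_between (c i) q (c (Suc i))"
    using box_between_chain[OF assms(1,2) order_refl] by blast
  then show ?thesis
    by (rule straight_through_drawing_from_chain) linarith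
qed

theorem theorem1:
  shows "\<exists>c::real. c > 0 \<and>
    (\<forall>n::nat. n \<ge> 2 \<longrightarrow>
      (\<forall>P :: point set. finite P \<and> general_orthogonal_position P \<and>
          real (card P) \<ge> c * real n * ln (real n) \<longrightarrow>
        (\<exists>pos hb. straight_through_drawing_path P n pos hb \<and> x_monotone_path n pos)))"
proof (intro exI[of _ 4] conjI allI impI)
  fix n :: nat and P :: "point set"
  assume "n \<ge> 2" and P: "finite P \<and> general_orthogonal_position P \<and>
    real (card P) \<ge> 4 * real n * ln (real n)"
  have "ln 2 \<le> ln (real n)" using \<open>n \<ge> 2\<close> by simp
  then have "2 / 3 \<le> ln (real n)" using ln2_ge_two_thirds by linarith
  then have "4 * real n * (2 / 3) \<le> 4 * real n * ln (real n)"
    by (rule mult_left_mono) simp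
  moreover have "real n \<ge> 2" using \<open>n \<ge> 2\<close> by simp
  ultimately have "real (2 * n + 1) \<le> real (card P)"
    using P by linarith
  then have "card P \<ge> 2 * n + 1" by linarith
  then show "\<exists>pos hb. straight_through_drawing_path P n pos hb \<and> x_monotone_path n pos"
    using straight_through_drawing_linear P by blast
qed simp

end
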